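(* Consider the two-player treatment model described in the context, and suppose that: (a) (strategic complementarity) $P_j^1-P_j^0>0$ almost surely for $j=1,2$; (b) $P_j^0,P_j^1$ ($j=1,2$) are identified, and the conditional CDF $H(v_1,v_2\mid x)$ and density $h(v_1,v_2\mid x)$ of $V=(V_1,V_2)$ given $X=x$ are identified (known); (c) for all $(d_1,d_2)\in\{0,1\}^2$, the instruments $Z=(Z_1,Z_2)$ are excluded from the structural functions $\mu_j^{(d_1,d_2)}$ and are independent of $(\varepsilon,U^{(d_1,d_2)})$ given $X$; and (d) for $j=1,2$, $Z_j$ contains a player-specific continuous variable such that $\pi_j^0(W_j)$ and $\pi_j^1(W_j)$ are non-degenerate and continuously distributed given $X$. Fix $x$. If $m^{(1,0)}(x,v_1,v_2)$, $m^{(0,1)}(x,v_1,v_2)$ and $h(v_1,v_2\mid x)$ are continuous in $(v_1,v_2)$, then $$m^{(1,0)}(x,p_1^0,p_2^1)=-\frac{1}{h(p_1^0,p_2^1\mid x)}\frac{\partial^2\psi^{(1,0)}(x,p_1^0,p_2^1)}{\partial p_1^0\,\partial p_2^1}\quad\text{for }(p_1^0,p_2^1)\in\operatorname{supp}[P_1^0,P_2^1\mid X=x,D=(1,0)],$$ $$m^{(0,1)}(x,p_1^1,p_2^0)=-\frac{1}{h(p_1^1,p_2^0\mid x)}\frac{\partial^2\psi^{(0,1)}(x,p_1^1,p_2^0)}{\partial p_1^1\,\partial p_2^0}\quad\text{for }(p_1^1,p_2^0)\in\operatorname{supp}[P_1^1,P_2^0\mid X=x,D=(0,1)],$$ so that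 these marginal treatment response functions are identified.
   Context: Two players $j\in\{1,2\}$ ($-j$ denotes the partner). Each has binary treatment $D_j\in\{0,1\}$; $D=(D_1,D_2)$. Potential outcomes $Y_j^{(d_j,d_{-j})}=\mu_j^{(d_j,d_{-j})}(X_j,U_j^{(d_j,d_{-j})})$ with observed covariates $X_j$, scalar unobservables $U_j^{(d_j,d_{-j})}$ and unknown functions $\mu_j^{(d_j,d_{-j})}$; observed outcome $Y_1=\sum_{d_1,d_2\in\{0,1\}}I^{(d_1,d_2)}Y_1^{(d_1,d_2)}$, where $I^{(d_1,d_2)}=\mathbf 1\{(D_1,D_2)=(d_1,d_2)\}$. Let $X=(X_1,X_2)$, $W_j=(X_j^\top,Z_j^\top)^\top$ with instruments $Z_j$, $\varepsilon=(\varepsilon_1,\varepsilon_2)$ continuously distributed, and $U^{(d_1,d_2)}=(U_1^{(d_1,d_2)},U_2^{(d_2,d_1)})$. Treatment decisions satisfy $D_j=\mathbf 1\{\pi_j(D_{-j},W_j)\ge\varepsilon_j\}$ for unknown $\pi_j$; write $\pi_j^d(\cdot)=\pi_j(d,\cdot)$. Define $V_j=F_{\varepsilon_j}(\varepsilon_j\mid X)$, $P_j^0=F_{\varepsilon_j}(\pi_j^0(W_j)\mid X)$, $P_j^1=F_{\varepsilon_j}(\pi_j^1(W_j)\mid X)$, with $F_{\varepsilon_j}(\cdot\mid X)$ the conditional CDF of $\varepsilon_j$ given $X$ (so $V_j\sim$ Uniform$[0,1]$ given $X$). Then $D_j=\mathbf 1\{P_j^0+D_{-j}(P_j^1-P_j^0)\ge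 V_j\}$, i.e. the realized $D$ is a pure-strategy Nash equilibrium of the complete-information game with payoffs $u_j(d_j,d_{-j})=d_j(P_j^0+d_{-j}(P_j^1-P_j^0)-V_j)$. Under complementarity this gives: $D=(1,0)\iff V_1\le P_1^0,\ V_2>P_2^1$; $D=(0,1)\iff V_1>P_1^1,\ V_2\le P_2^0$; $D=(1,1)\Rightarrow V_1\le P_1^1,\ V_2\le P_2^1$; $D=(0,0)\Rightarrow V_1>P_1^0,\ V_2>P_2^0$. Marginal treatment response (MTR) function: $m^{(d_1,d_2)}(x,p_1,p_2)=E[Y_1^{(d_1,d_2)}\mid X=x,V_1=p_1,V_2=p_2]$. Also $\psi^{(1,0)}(x,p_1^0,p_2^1)=E[I^{(1,0)}Y_1\mid X=x,P_1^0=p_1^0,P_2^1=p_2^1]$ and $\psi^{(0,1)}(x,p_1^1,p_2^0)=E[I^{(0,1)}Y_1\mid X=x,P_1^1=p_1^1,P_2^0=p_2^0]$, which are identified from the data. *)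

theory Defs
  imports "HOL-Probability.Probability"
begin

text \<open>Everything is formulated conditionally on \<open>X = x\<close> for the fixed value \<open>x\<close>:
  the probability space \<open>M\<close> is the conditional law given \<open>X = x\<close>.\<close>

definition cond_exp_version ::
  "'a measure \<Rightarrow> ('a \<Rightarrow> real \<times> real) \<Rightarrow> ('a \<Rightarrow> real) \<Rightarrow> (real \<times> real \<Rightarrow> real) \<Rightarrow> bool" where
  "cond_exp_version M Q f g \<longleftrightarrow>
     g \<in> borel_measurable borel \<and> integrable M (\<lambda>\<omega>. g (Q \<omega>)) \<and>
     (\<forall>A \<in> sets borel. (\<integral>\<omega>. f \<omega> * indicator A (Q \<omega>) \<partial>M) = (\<integral>\<omega>. g (Q \<omega>) * indicator A (Q \<omega>) \<partial>M))"

definition supp_on ::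
  "'a measure \<Rightarrow> ('a \<Rightarrow> real \<times> real) \<Rightarrow> ('a \<Rightarrow> bool) \<Rightarrow> (real \<times> real) set" where
  "supp_on M Q E = {p. \<forall>e>0. measure M {\<omega> \<in> space M. Q \<omega> \<in> ball p e \<and> E \<omega>} > 0}"

definition has_mixed_partial :: "(real \<times> real \<Rightarrow> real) \<Rightarrow> real \<times> real \<Rightarrow> real \<Rightarrow> bool" where
  "has_mixed_partial f p c \<longleftrightarrow>
     (\<exists>g. (\<forall>\<^sub>F a in nhds (fst p). ((\<lambda>b. f (a, b)) has_real_derivative g a) (at (snd p)))
        \<and> (g has_real_derivative c) (at (fst p)))"

end

theory Submission
  imports Defs
begin

text \<open>Under strategic complementarity, \<open>D = (1,0)\<close> holds exactly when \<open>V\<close> lies in the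
  rectangle \<open>[0, P10] \<times> (P21, 1]\<close>, and \<open>D = (0,1)\<close> exactly when it lies in
  \<open>(P11, 1] \<times> [0, P20]\<close>. Since the propensities are independent of \<open>(V, Y 1 0)\<close>, the
  conditional mean \<open>psi10\<close> of \<open>I(1,0) Y1\<close> given \<open>(P10, P21) = p\<close> is obtained by freezing
  \<open>p\<close>: it is the integral of \<open>h m10\<close> over \<open>[0, p1] \<times> (p2, 1]\<close>. This version is
  continuous, so it coincides with the continuous \<open>psi10\<close> near every interior point of the
  support, and differentiating the rectangle integral once in each corner coordinate
  gives \<open>-h m10\<close>.\<close>

section \<open>Independence and conditional expectations\<close>

text \<open>The library's \<open>indep_var\<close> needs both random variables to have the same codomain
  type, whereas here a random vector in \<open>\<real>\<^sup>2\<close> is independent of one in \<open>\<real>\<^sup>3\<close>.\<close>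

definition indep_rv ::
    "'a measure \<Rightarrow> ('a \<Rightarrow> 'b::topological_space) \<Rightarrow> ('a \<Rightarrow> 'c::topological_space) \<Rightarrow> bool" where
  "indep_rv M X Y \<longleftrightarrow> (\<forall>A \<in> sets borel. \<forall>B \<in> sets borel.
     measure M {\<omega> \<in> space M. X \<omega> \<in> A \<and> Y \<omega> \<in> B}
     = measure M {\<omega> \<in> space M. X \<omega> \<in> A} * measure M {\<omega> \<in> space M. Y \<omega> \<in> B})"

lemma indep_rv_comp:
  fixes f :: "'b::topological_space \<Rightarrow> 'd::topological_space"
    and g :: "'c::topological_space \<Rightarrow> 'e::topological_space"
  assumes "indep_rv M X Y" "f \<in> borel_measurable borel" "g \<in> borel_measurable borel"
  shows "indep_rv M (\<lambda>\<omega>. f (X \<omega>)) (\<lambda>\<omega>. g (Y \<omega>))"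
  unfolding indep_rv_def
proof (intro ballI)
  fix A :: "'d set" and B :: "'e set" assume "A \<in> sets borel" "B \<in> sets borel"
  then have "f -` A \<in> sets borel" "g -` B \<in> sets borel"
    using assms(2,3) by (auto dest: measurable_sets)
  with assms(1) have "measure M {\<omega> \<in> space M. X \<omega> \<in> f -` A \<and> Y \<omega> \<in> g -` B}
      = measure M {\<omega> \<in> space M. X \<omega> \<in> f -` A} * measure M {\<omega> \<in> space M. Y \<omega> \<in> g -` B}"
    unfolding indep_rv_def by blast
  then show "measure M {\<omega> \<in> space M. f (X \<omega>) \<in> A \<and> g (Y \<omega>) \<in> B}
      = measure M {\<omega> \<in> space M. f (X \<omega>) \<in> A} * measure M {\<omega> \<in> space M. g (Y \<omega>) \<in> B}"
    by simp
qed

lemma (in prob_space) distr_pair_eq_pair_measure_if_indep_rv: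
  assumes [measurable]: "X \<in> borel_measurable M" "Y \<in> borel_measurable M"
    and indep: "indep_rv M X Y"
  shows "distr M borel X \<Otimes>\<^sub>M distr M borel Y = distr M (borel \<Otimes>\<^sub>M borel) (\<lambda>\<omega>. (X \<omega>, Y \<omega>))"
proof (rule pair_measure_eqI)
  fix A B assume "A \<in> sets (distr M borel X)" "B \<in> sets (distr M borel Y)"
  then have [measurable]: "A \<in> sets borel" "B \<in> sets borel" by auto
  have "(\<lambda>\<omega>. (X \<omega>, Y \<omega>)) -` (A \<times> B) \<inter> space M = {\<omega> \<in> space M. X \<omega> \<in> A \<and> Y \<omega> \<in> B}"
    by auto
  with indep show "emeasure (distr M borel X) A * emeasure (distr M borel Y) B
      = emeasure (distr M (borel \<Otimes>\<^sub>M borel) (\<lambda>\<omega>. (X \<omega>, Y \<omega>))) (A \<times> B)"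
    by (simp add: emeasure_distr emeasure_eq_measure indep_rv_def ennreal_mult vimage_def Int_def conj_commute)
qed (auto intro!: prob_space_imp_sigma_finite prob_space_distr)

lemma (in prob_space) cond_exp_version_indep_freeze:
  fixes Q :: "'a \<Rightarrow> real \<times> real" and W :: "'a \<Rightarrow> 'b::topological_space"
    and F :: "real \<times> real \<Rightarrow> 'b \<Rightarrow> real"
  assumes QW[measurable]: "Q \<in> borel_measurable M" "W \<in> borel_measurable M"
    and indep: "indep_rv M Q W"
    and F[measurable]: "case_prod F \<in> borel_measurable (borel \<Otimes>\<^sub>M borel)"
    and int: "integrable M (\<lambda>\<omega>. F (Q \<omega>) (W \<omega>))"
  shows "cond_exp_version M Q (\<lambda>\<omega>. F (Q \<omega>) (W \<omega>)) (\<lambda>q. \<integral>\<omega>. F q (W \<omega>) \<partial>M)"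
proof -
  let ?MQ = "distr M borel Q" and ?MW = "distr M borel W"
  note prod = distr_pair_eq_pair_measure_if_indep_rv[OF QW indep]
  interpret MQ: prob_space ?MQ by (simp add: prob_space_distr)
  interpret MW: prob_space ?MW by (simp add: prob_space_distr)
  interpret PS: pair_sigma_finite ?MQ ?MW ..
  define G where "G q = (\<integral>\<omega>. F q (W \<omega>) \<partial>M)" for q
  define FA where "FA A z = F (fst z) (snd z) * indicator A (fst z)" for A z
  have FA_meas[measurable]: "FA A \<in> borel_measurable (borel \<Otimes>\<^sub>M borel)" if "A \<in> sets borel" for A
    using that unfolding FA_def by measurable
  have FA_int: "integrable (?MQ \<Otimes>\<^sub>M ?MW) (FA A)" if [measurable]: "A \<in> sets borel" for A
  proof -
    have "integrable M (\<lambda>\<omega>. FA A (Q \<omega>, W \<omega>))"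
      by (rule Bochner_Integration.integrable_bound[OF int]) (auto simp: FA_def indicator_def)
    then show ?thesis unfolding prod by (subst integrable_distr_eq) auto
  qed
  have inner: "(\<integral>w. FA A (q, w) \<partial>?MW) = G q * indicator A q" if "A \<in> sets borel" for A q
    using that by (subst integral_distr) (auto simp: FA_def G_def)
  have G_int: "integrable ?MQ G"
    using PS.integrable_fst'[OF FA_int[of UNIV]] inner[of UNIV] by simp
  have [measurable]: "G \<in> borel_measurable borel"
    using borel_measurable_integrable[OF G_int] by simp
  have "(\<integral>\<omega>. F (Q \<omega>) (W \<omega>) * indicator A (Q \<omega>) \<partial>M) = (\<integral>\<omega>. G (Q \<omega>) * indicator A (Q \<omega>) \<partial>M)"
    if [measurable]: "A \<in> sets borel" for A
  proof -
    have "(\<integral>\<omega>. F (Q \<omega>) (W \<omega>) * indicator A (Q \<omega>) \<partial>M) = (\<integral>z. FA A z \<partial>(?MQ \<Otimes>\<^sub>M ?MW))"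
      unfolding prod by (subst integral_distr) (auto simp: FA_def)
    also have "\<dots> = (\<integral>q. G q * indicator A q \<partial>?MQ)"
      using PS.integral_fst'[OF FA_int] inner by simp
    also have "\<dots> = (\<integral>\<omega>. G (Q \<omega>) * indicator A (Q \<omega>) \<partial>M)"
      by (subst integral_distr) auto
    finally show ?thesis .
  qed
  moreover have "integrable M (\<lambda>\<omega>. G (Q \<omega>))"
    using G_int by (subst (asm) integrable_distr_eq) auto
  ultimately show ?thesis
    unfolding cond_exp_version_def G_def[symmetric] by auto
qed

lemma cond_exp_version_cong_AE:
  assumes "cond_exp_version M Q f g" "AE \<omega> in M. f \<omega> = f' \<omega>"
    and [measurable]: "Q \<in> borel_measurable M" "f \<in> borel_measurable M" "f' \<in> borel_measurable M"
  shows "cond_exp_version M Q f' g"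
proof -
  have "(\<integral>\<omega>. f \<omega> * indicator A (Q \<omega>) \<partial>M) = (\<integral>\<omega>. f' \<omega> * indicator A (Q \<omega>) \<partial>M)"
    if [measurable]: "A \<in> sets borel" for A
    using assms(2) by (intro integral_cong_AE) auto
  with assms(1) show ?thesis
    unfolding cond_exp_version_def by simp
qed

lemma AE_eq_cond_exp_version:
  assumes [measurable]: "Q \<in> borel_measurable M"
    and g1: "cond_exp_version M Q f g1" and g2: "cond_exp_version M Q f g2"
  shows "AE q in distr M borel Q. g1 q = g2 q"
proof (rule density_unique_real)
  have [measurable]: "g1 \<in> borel_measurable borel" "g2 \<in> borel_measurable borel"
    using g1 g2 by (simp_all add: cond_exp_version_def)
  show "integrable (distr M borel Q) g1" "integrable (distr M borel Q) g2"
    using g1 g2 by (simp_all add: cond_exp_version_def integrable_distr_eq)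
  fix A assume "A \<in> sets (distr M borel Q)"
  then have [measurable]: "A \<in> sets borel" by simp
  have "(\<integral>q\<in>A. g q \<partial>distr M borel Q) = (\<integral>\<omega>. g (Q \<omega>) * indicator A (Q \<omega>) \<partial>M)"
    if [measurable]: "g \<in> borel_measurable borel" for g :: "real \<times> real \<Rightarrow> real"
    unfolding set_lebesgue_integral_def by (subst integral_distr) (auto simp: mult.commute)
  with g1 g2 show "(\<integral>q\<in>A. g1 q \<partial>distr M borel Q) = (\<integral>q\<in>A. g2 q \<partial>distr M borel Q)"
    by (simp add: cond_exp_version_def)
qed

lemma eq_on_supp_on_if_AE_eq:
  fixes u v :: "real \<times> real \<Rightarrow> 'b::real_normed_vector"
  assumes [measurable]: "Q \<in> borel_measurable M"
    and AE: "AE q in distr M borel Q. u q = v q"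
    and p: "p \<in> supp_on M Q (\<lambda>_. True)" and "isCont u p" "isCont v p"
  shows "u p = v p"
proof (rule ccontr)
  assume "u p \<noteq> v p"
  have "isCont (\<lambda>q. u q - v q) p"
    using assms(4,5) by (intro continuous_intros)
  then have "((\<lambda>q. u q - v q) \<longlongrightarrow> u p - v p) (nhds p)"
    using tendsto_at_iff_tendsto_nhds[of "\<lambda>q. u q - v q" p] by (simp add: isCont_def)
  then have "\<forall>\<^sub>F q in nhds p. u q - v q \<noteq> 0"
    by (rule tendsto_imp_eventually_ne) (use \<open>u p \<noteq> v p\<close> in simp)
  then obtain e where "e > 0" and e: "\<And>q. q \<in> ball p e \<Longrightarrow> u q \<noteq> v q"
    unfolding eventually_nhds_metric by (auto simp: dist_commute)
  have "AE \<omega> in M. u (Q \<omega>) = v (Q \<omega>)"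
    using AE by (rule AE_distrD[rotated]) simp
  then have "AE \<omega> in M. \<not> (Q \<omega> \<in> ball p e \<and> True)"
    by eventually_elim (metis e mem_ball)
  then have "measure M {\<omega> \<in> space M. Q \<omega> \<in> ball p e \<and> True} = 0"
    by (simp add: emeasure_eq_0_AE measure_def)
  with p \<open>e > 0\<close> show False
    unfolding supp_on_def by fastforce
qed

lemma supp_on_subset_closed:
  assumes "closed C" "\<And>\<omega>. \<omega> \<in> space M \<Longrightarrow> Q \<omega> \<in> C"
  shows "supp_on M Q E \<subseteq> C"
proof
  fix p assume p: "p \<in> supp_on M Q E"
  show "p \<in> C"
  proof (rule ccontr)
    assume "p \<notin> C"
    then obtain e where "e > 0" "ball p e \<subseteq> - C"
      using open_Compl[OF assms(1)] open_contains_ball by blast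
    then have "{\<omega> \<in> space M. Q \<omega> \<in> ball p e \<and> E \<omega>} = {}"
      using assms(2) by blast
    moreover have "measure M {\<omega> \<in> space M. Q \<omega> \<in> ball p e \<and> E \<omega>} > 0"
      using p \<open>e > 0\<close> unfolding supp_on_def by blast
    ultimately show False
      by (metis measure_empty less_irrefl)
  qed
qed

lemma interior_supp_on_unit_square:
  assumes "\<And>\<omega>. \<omega> \<in> space M \<Longrightarrow> Q \<omega> \<in> {0..1} \<times> {0..1}"
  shows "interior (supp_on M Q E) \<subseteq> {0<..<1} \<times> {0<..<1}"
  using interior_mono[OF supp_on_subset_closed[OF _ assms]]
  by (simp add: interior_Times closed_Times)

lemma integral_cond_exp_version_density:
  assumes m: "cond_exp_version M V Y m"
    and hdens: "distributed M lborel V (\<lambda>v. ennreal (h v))" and hnn: "\<And>v. 0 \<le> h v"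
    and [measurable]: "S \<in> sets borel"
  shows "(\<integral>\<omega>. Y \<omega> * indicator S (V \<omega>) \<partial>M) = (\<integral>v. indicator S v * (h v * m v) \<partial>lborel)"
proof -
  have [measurable]: "m \<in> borel_measurable borel"
    using m by (simp add: cond_exp_version_def)
  have "(\<integral>\<omega>. Y \<omega> * indicator S (V \<omega>) \<partial>M) = (\<integral>\<omega>. m (V \<omega>) * indicator S (V \<omega>) \<partial>M)"
    using m by (simp add: cond_exp_version_def)
  also have "\<dots> = (\<integral>v. h v * (m v * indicator S v) \<partial>lborel)"
    by (rule distributed_integral[OF hdens, symmetric]) (auto simp: hnn)
  finally show ?thesis
    by (simp add: mult_ac)
qed

section \<open>Mixed partial derivatives of rectangle integrals\<close>

lemma has_mixed_partial_cong_nhds: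
  assumes "has_mixed_partial g p c" and eq: "\<forall>\<^sub>F q in nhds p. f q = g q"
  shows "has_mixed_partial f p c"
proof -
  obtain g' where ev: "\<forall>\<^sub>F a in nhds (fst p). ((\<lambda>b. g (a, b)) has_real_derivative g' a) (at (snd p))"
    and d: "(g' has_real_derivative c) (at (fst p))"
    using assms(1) unfolding has_mixed_partial_def by blast
  have "\<forall>\<^sub>F q in nhds (fst p) \<times>\<^sub>F nhds (snd p). f q = g q"
    using eq nhds_prod[of "fst p" "snd p"] by simp
  then obtain Pa Pb where Pa: "eventually Pa (nhds (fst p))" and Pb: "eventually Pb (nhds (snd p))"
    and P: "\<And>a b. Pa a \<Longrightarrow> Pb b \<Longrightarrow> f (a, b) = g (a, b)"
    unfolding eventually_prod_filter by blast
  have "\<forall>\<^sub>F a in nhds (fst p). ((\<lambda>b. f (a, b)) has_real_derivative g' a) (at (snd p))"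
    using ev Pa
  proof eventually_elim
    case (elim a)
    have "\<forall>\<^sub>F b in nhds (snd p). f (a, b) = g (a, b)"
      using Pb by eventually_elim (use elim P in blast)
    from DERIV_cong_ev[OF refl this refl] elim(1) show ?case
      by simp
  qed
  with d show ?thesis
    unfolding has_mixed_partial_def by blast
qed

lemma has_mixed_partial_separable_diff:
  assumes "has_mixed_partial f p c" and v: "(v has_real_derivative d) (at (snd p))"
  shows "has_mixed_partial (\<lambda>q. u (fst q) + v (snd q) - f q) p (- c)"
proof -
  obtain g where ev: "\<forall>\<^sub>F a in nhds (fst p). ((\<lambda>b. f (a, b)) has_real_derivative g a) (at (snd p))"
    and dg: "(g has_real_derivative c) (at (fst p))"
    using assms(1) unfolding has_mixed_partial_def by blast
  have "\<forall>\<^sub>F a in nhds (fst p).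
      ((\<lambda>b. u a + v b - f (a, b)) has_real_derivative d - g a) (at (snd p))"
    using ev by eventually_elim (auto intro!: derivative_eq_intros v)
  moreover have "((\<lambda>a. d - g a) has_real_derivative - c) (at (fst p))"
    using dg by (auto intro!: derivative_eq_intros)
  ultimately show ?thesis
    unfolding has_mixed_partial_def by auto
qed

lemma integral_0_eq_stretch:
  fixes f :: "real \<Rightarrow> real"
  assumes "0 \<le> a"
  shows "integral {0..a} f = a * integral {0..1} (\<lambda>t. f (a * t))"
proof (cases "a = 0")
  case False
  with assms integral_stretch_real[where m = a and f = f and a = 0 and b = a] show ?thesis
    by simp
qed simp

text \<open>Rescaling to \<open>[0, 1]\<close> moves the variable endpoint into the integrand, where
  \<open>integral_continuous_on_param\<close> applies.\<close>

lemma continuous_on_integral_0_param: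
  fixes f :: "'a::topological_space \<Rightarrow> real \<Rightarrow> real"
  assumes f: "continuous_on (U \<times> {0..c}) (\<lambda>(x, t). f x t)"
    and u: "continuous_on U u" "\<And>x. x \<in> U \<Longrightarrow> u x \<in> {0..c}"
  shows "continuous_on U (\<lambda>x. integral {0..u x} (f x))"
proof -
  have "continuous_on (U \<times> cbox 0 1) (\<lambda>z. (\<lambda>(x, t). f x t) (fst z, u (fst z) * snd z))"
  proof (rule continuous_on_compose2[OF f])
    show "continuous_on (U \<times> cbox 0 1) (\<lambda>z. (fst z, u (fst z) * snd z))"
      by (intro continuous_intros continuous_on_compose2[OF u(1)]) auto
    show "(\<lambda>z. (fst z, u (fst z) * snd z)) ` (U \<times> cbox 0 1) \<subseteq> U \<times> {0..c}"
      using u(2) by (auto intro!: mult_left_le_one_le order_trans[OF mult_left_le])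
  qed
  then have "continuous_on U (\<lambda>x. integral (cbox 0 1) (\<lambda>t. f x (u x * t)))"
    by (intro integral_continuous_on_param) (simp add: case_prod_unfold)
  then have "continuous_on U (\<lambda>x. u x * integral {0..1} (\<lambda>t. f x (u x * t)))"
    by (intro continuous_intros u(1)) simp
  then show ?thesis
    by (rule continuous_on_eq) (metis atLeastAtMost_iff integral_0_eq_stretch u(2))
qed

definition corner_integral :: "(real \<times> real \<Rightarrow> real) \<Rightarrow> real \<times> real \<Rightarrow> real" where
  "corner_integral k q = (\<integral>v. indicator ({0..fst q} \<times> {0..snd q}) v * k v \<partial>lborel)"

text \<open>With the \<open>y\<close>-integral outermost, both partial derivatives of the corner
  integral are instances of the fundamental theorem of calculus.\<close>

lemma corner_integral_eq_iterated:
  fixes k :: "real \<times> real \<Rightarrow> real"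
  assumes "continuous_on ({0..a} \<times> {0..b}) k"
  shows "corner_integral k (a, b) = integral {0..b} (\<lambda>y. integral {0..a} (\<lambda>x. k (x, y)))"
proof -
  have box: "{0..a} \<times> {0..b} = cbox (0, 0) (a, b)"
    by (simp add: cbox_Pair_eq)
  have "set_integrable lborel (cbox (0, 0) (a, b)) k"
    unfolding set_integrable_def using assms
    by (intro borel_integrable_compact) (auto simp: box)
  then have "corner_integral k (a, b) = integral (cbox (0, 0) (a, b)) k"
    by (simp add: corner_integral_def box set_borel_integral_eq_integral(2)[symmetric]
        set_lebesgue_integral_def)
  also have "\<dots> = integral (cbox 0 a) (\<lambda>x. integral (cbox 0 b) (\<lambda>y. k (x, y)))"
    using assms by (intro integral_prod_continuous) (simp add: box)
  also have "\<dots> = integral (cbox 0 b) (\<lambda>y. integral (cbox 0 a) (\<lambda>x. k (x, y)))"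
    using assms by (intro integral_swap_continuous) (simp add: box case_prod_unfold)
  finally show ?thesis
    by simp
qed

lemma continuous_on_integral_slice:
  fixes k :: "real \<times> real \<Rightarrow> real"
  assumes "continuous_on ({0..1} \<times> {0..1}) k"
  shows "continuous_on ({0..1} \<times> {0..1}) (\<lambda>q. integral {0..fst q} (\<lambda>x. k (x, snd q)))"
proof (rule continuous_on_integral_0_param[where c = 1 and f = "\<lambda>q x. k (x, snd q)" and u = fst])
  have "continuous_on (({0..1} \<times> {0..1}) \<times> {0..1}) (\<lambda>z. k (snd z, snd (fst z)))"
    by (rule continuous_on_compose2[OF assms]) (auto intro!: continuous_intros)
  then show "continuous_on (({0..1} \<times> {0..1}) \<times> {0..1}) (\<lambda>(q, x). k (x, snd q))"
    by (simp add: case_prod_unfold)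
qed (auto intro: continuous_on_fst)

lemma continuous_on_corner_integral:
  fixes k :: "real \<times> real \<Rightarrow> real"
  assumes k: "continuous_on ({0..1} \<times> {0..1}) k"
  shows "continuous_on ({0..1} \<times> {0..1}) (corner_integral k)"
proof -
  have "continuous_on (({0..1} \<times> {0..1}) \<times> {0..1})
      (\<lambda>z. (\<lambda>q. integral {0..fst q} (\<lambda>x. k (x, snd q))) (fst (fst z), snd z))"
    by (rule continuous_on_compose2[OF continuous_on_integral_slice[OF k]], intro continuous_intros) auto
  then have "continuous_on ({0..1} \<times> {0..1})
      (\<lambda>q. integral {0..snd q} (\<lambda>y. integral {0..fst q} (\<lambda>x. k (x, y))))"
    by (intro continuous_on_integral_0_param[where c = 1]) (auto simp: case_prod_unfold intro: continuous_on_snd)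
  then show ?thesis
  proof (rule continuous_on_eq)
    fix q :: "real \<times> real" assume "q \<in> {0..1} \<times> {0..1}"
    then have "continuous_on ({0..fst q} \<times> {0..snd q}) k"
      by (intro continuous_on_subset[OF k]) auto
    from corner_integral_eq_iterated[OF this] show
      "integral {0..snd q} (\<lambda>y. integral {0..fst q} (\<lambda>x. k (x, y))) = corner_integral k q"
      by (simp only: prod.collapse)
  qed
qed

lemma has_real_derivative_integral_0:
  assumes "continuous_on {0..c} g" "t \<in> {0<..<c}"
  shows "((\<lambda>x. integral {0..x} g) has_real_derivative g t) (at t)"
proof -
  have "at t within {0..c} = at t"
    using assms(2) by (intro at_within_interior) simp
  with integral_has_real_derivative[OF assms(1), of t] assms(2) show ?thesis
    by (simp only:) auto
qed

lemma has_real_derivative_corner_integral_snd: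
  fixes k :: "real \<times> real \<Rightarrow> real"
  assumes k: "continuous_on ({0..1} \<times> {0..1}) k" and "a \<in> {0..1}" "b \<in> {0<..<1}"
  shows "((\<lambda>b. corner_integral k (a, b)) has_real_derivative integral {0..a} (\<lambda>x. k (x, b))) (at b)"
proof -
  define slice where "slice y = integral {0..a} (\<lambda>x. k (x, y))" for y
  have "(\<lambda>y. (a, y)) ` {0..1} \<subseteq> {0..1} \<times> {0..1}"
    using assms(2) by auto
  then have "continuous_on {0..1} slice"
    using continuous_on_compose2[OF continuous_on_integral_slice[OF k]
        continuous_on_Pair[OF continuous_on_const continuous_on_id]]
    by (simp add: slice_def)
  then have deriv: "((\<lambda>b. integral {0..b} slice) has_real_derivative slice b) (at b)"
    using has_real_derivative_integral_0[of 1 slice b] assms(3) by simp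
  have "\<forall>\<^sub>F b' in nhds b. b' \<in> {0<..<1}"
    using assms(3) by (intro eventually_nhds_in_open) auto
  then have "\<forall>\<^sub>F b' in nhds b. corner_integral k (a, b') = integral {0..b'} slice"
  proof eventually_elim
    case (elim b')
    with assms(2) show ?case
      unfolding slice_def by (intro corner_integral_eq_iterated continuous_on_subset[OF k]) auto
  qed
  from DERIV_cong_ev[OF refl this refl] deriv show ?thesis
    by (simp add: slice_def)
qed

lemma has_mixed_partial_corner_integral:
  fixes k :: "real \<times> real \<Rightarrow> real"
  assumes k: "continuous_on ({0..1} \<times> {0..1}) k" and p: "p \<in> {0<..<1} \<times> {0<..<1}"
  shows "has_mixed_partial (corner_integral k) p (k p)"
proof -
  obtain a b where p_eq: "p = (a, b)" and a: "a \<in> {0<..<1}" and b: "b \<in> {0<..<1}"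
    using p by auto
  have "\<forall>\<^sub>F a' in nhds a. a' \<in> {0<..<1}"
    using a by (intro eventually_nhds_in_open) auto
  then have "\<forall>\<^sub>F a' in nhds a. ((\<lambda>b'. corner_integral k (a', b'))
      has_real_derivative integral {0..a'} (\<lambda>x. k (x, b))) (at b)"
    by eventually_elim (use b in \<open>simp add: has_real_derivative_corner_integral_snd[OF k]\<close>)
  moreover have "continuous_on {0..1} (\<lambda>x. k (x, b))"
    using b by (intro continuous_on_compose2[OF k]) (auto intro!: continuous_intros)
  then have "((\<lambda>a'. integral {0..a'} (\<lambda>x. k (x, b))) has_real_derivative k (a, b)) (at a)"
    using a by (rule has_real_derivative_integral_0)
  ultimately show ?thesis
    unfolding has_mixed_partial_def p_eq by auto
qed

lemma integrable_indicator_box: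
  fixes k :: "real \<times> real \<Rightarrow> real"
  assumes "continuous_on ({0..a} \<times> {0..b}) k"
  shows "integrable lborel (\<lambda>v. indicator ({0..a} \<times> {0..b}) v * k v)"
  using borel_integrable_compact[of "{0..a} \<times> {0..b}" k] assms
  by (simp add: compact_Times)

lemma integral_indicator_box_diff:
  fixes k :: "real \<times> real \<Rightarrow> real"
  assumes k: "continuous_on ({0..1} \<times> {0..1}) k"
    and "q \<in> {0..1} \<times> {0..1}" "q' \<in> {0..1} \<times> {0..1}"
    and S: "\<And>v. indicator S v = (indicator ({0..fst q} \<times> {0..snd q}) v
                                  - indicator ({0..fst q'} \<times> {0..snd q'}) v :: real)"
  shows "(\<integral>v. indicator S v * k v \<partial>lborel) = corner_integral k q - corner_integral k q'"
proof -
  have "integrable lborel (\<lambda>v. indicator ({0..fst r} \<times> {0..snd r}) v * k v)"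
    if "r \<in> {0..1} \<times> {0..1}" for r
    using that by (intro integrable_indicator_box continuous_on_subset[OF k]) auto
  with assms(2,3) show ?thesis
    unfolding corner_integral_def S left_diff_distrib by simp
qed

section \<open>The equilibrium cells\<close>

lemma equilibrium_iff:
  fixes d1 d2 p10 p11 p20 p21 v1 v2 :: real
  assumes d1: "d1 = (if p10 + d2 * (p11 - p10) \<ge> v1 then 1 else 0)"
    and d2: "d2 = (if p20 + d1 * (p21 - p20) \<ge> v2 then 1 else 0)"
    and "p10 < p11" "p20 < p21"
  shows "d1 = 1 \<and> d2 = 0 \<longleftrightarrow> v1 \<le> p10 \<and> p21 < v2"
    and "d1 = 0 \<and> d2 = 1 \<longleftrightarrow> p11 < v1 \<and> v2 \<le> p20"
  using assms by (auto split: if_splits)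

definition region10 :: "real \<times> real \<Rightarrow> (real \<times> real) set" where
  "region10 q = {0..fst q} \<times> {snd q<..1}"

definition region01 :: "real \<times> real \<Rightarrow> (real \<times> real) set" where
  "region01 q = {fst q<..1} \<times> {0..snd q}"

lemma borel_measurable_indicator_region10:
  "(\<lambda>z. indicator (region10 (fst z)) (snd z) :: real) \<in> borel_measurable borel"
proof -
  have "{z. 0 \<le> fst (snd z) \<and> fst (snd z) \<le> fst (fst z) \<and> snd (snd z) \<le> 1}
      \<inter> {z. snd (fst z) < snd (snd z)} \<in> sets (borel :: ((real \<times> real) \<times> real \<times> real) measure)"
    by (intro sets.Int borel_closed borel_open closed_Collect_conj closed_Collect_le
        open_Collect_less continuous_intros)
  moreover have "(\<lambda>z. indicator (region10 (fst z)) (snd z) :: real)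
      = indicator ({z. 0 \<le> fst (snd z) \<and> fst (snd z) \<le> fst (fst z) \<and> snd (snd z) \<le> 1}
          \<inter> {z. snd (fst z) < snd (snd z)})"
    by (auto simp: region10_def indicator_def fun_eq_iff)
  ultimately show ?thesis
    by simp
qed

lemma borel_measurable_indicator_region01:
  "(\<lambda>z. indicator (region01 (fst z)) (snd z) :: real) \<in> borel_measurable borel"
proof -
  have "{z. fst (snd z) \<le> 1 \<and> 0 \<le> snd (snd z) \<and> snd (snd z) \<le> snd (fst z)}
      \<inter> {z. fst (fst z) < fst (snd z)} \<in> sets (borel :: ((real \<times> real) \<times> real \<times> real) measure)"
    by (intro sets.Int borel_closed borel_open closed_Collect_conj closed_Collect_le
        open_Collect_less continuous_intros)
  moreover have "(\<lambda>z. indicator (region01 (fst z)) (snd z) :: real)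
      = indicator ({z. fst (snd z) \<le> 1 \<and> 0 \<le> snd (snd z) \<and> snd (snd z) \<le> snd (fst z)}
          \<inter> {z. fst (fst z) < fst (snd z)})"
    by (auto simp: region01_def indicator_def fun_eq_iff)
  ultimately show ?thesis
    by simp
qed

lemma region10_integral:
  fixes k :: "real \<times> real \<Rightarrow> real"
  assumes k: "continuous_on ({0..1} \<times> {0..1}) k"
  shows "continuous_on ({0<..<1} \<times> {0<..<1}) (\<lambda>q. \<integral>v. indicator (region10 q) v * k v \<partial>lborel)"
    and "\<And>q. q \<in> {0<..<1} \<times> {0<..<1} \<Longrightarrow>
      has_mixed_partial (\<lambda>q. \<integral>v. indicator (region10 q) v * k v \<partial>lborel) q (- k q)"
proof -
  let ?G = "\<lambda>q. corner_integral k (fst q, 1) + 0 - corner_integral k q"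
  have eq: "(\<integral>v. indicator (region10 q) v * k v \<partial>lborel) = ?G q"
    if "q \<in> {0<..<1} \<times> {0<..<1}" for q
    using that by (subst integral_indicator_box_diff[OF k, of "(fst q, 1)" q])
      (auto simp: region10_def indicator_def)
  have "continuous_on ({0<..<1} \<times> {0<..<1}) (\<lambda>q. corner_integral k (fst q, 1))"
    by (rule continuous_on_compose2[OF continuous_on_corner_integral[OF k]]) (auto intro!: continuous_intros)
  moreover have "continuous_on ({0<..<1} \<times> {0<..<1}) (corner_integral k)"
    by (rule continuous_on_subset[OF continuous_on_corner_integral[OF k]]) auto
  ultimately have "continuous_on ({0<..<1} \<times> {0<..<1}) ?G"
    by (intro continuous_on_diff continuous_on_add continuous_on_const)
  then show "continuous_on ({0<..<1} \<times> {0<..<1}) (\<lambda>q. \<integral>v. indicator (region10 q) v * k v \<partial>lborel)"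
    by (rule continuous_on_eq) (simp add: eq)
  fix q :: "real \<times> real" assume q: "q \<in> {0<..<1} \<times> {0<..<1}"
  have "has_mixed_partial ?G q (- k q)"
    using has_mixed_partial_separable_diff[OF has_mixed_partial_corner_integral[OF k q] DERIV_const[of 0],
        where u = "\<lambda>a. corner_integral k (a, 1)"]
    by simp
  moreover have "\<forall>\<^sub>F r in nhds q. r \<in> {0<..<1} \<times> {0<..<1}"
    using q by (intro eventually_nhds_in_open open_Times) auto
  then have "\<forall>\<^sub>F r in nhds q. (\<integral>v. indicator (region10 r) v * k v \<partial>lborel) = ?G r"
    by eventually_elim (rule eq)
  ultimately show "has_mixed_partial (\<lambda>q. \<integral>v. indicator (region10 q) v * k v \<partial>lborel) q (- k q)"
    by (rule has_mixed_partial_cong_nhds)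
qed

lemma region01_integral:
  fixes k :: "real \<times> real \<Rightarrow> real"
  assumes k: "continuous_on ({0..1} \<times> {0..1}) k"
  shows "continuous_on ({0<..<1} \<times> {0<..<1}) (\<lambda>q. \<integral>v. indicator (region01 q) v * k v \<partial>lborel)"
    and "\<And>q. q \<in> {0<..<1} \<times> {0<..<1} \<Longrightarrow>
      has_mixed_partial (\<lambda>q. \<integral>v. indicator (region01 q) v * k v \<partial>lborel) q (- k q)"
proof -
  let ?G = "\<lambda>q. 0 + corner_integral k (1, snd q) - corner_integral k q"
  have eq: "(\<integral>v. indicator (region01 q) v * k v \<partial>lborel) = ?G q"
    if "q \<in> {0<..<1} \<times> {0<..<1}" for q
    using that by (subst integral_indicator_box_diff[OF k, of "(1, snd q)" q])
      (auto simp: region01_def indicator_def)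
  have "continuous_on ({0<..<1} \<times> {0<..<1}) (\<lambda>q. corner_integral k (1, snd q))"
    by (rule continuous_on_compose2[OF continuous_on_corner_integral[OF k]]) (auto intro!: continuous_intros)
  moreover have "continuous_on ({0<..<1} \<times> {0<..<1}) (corner_integral k)"
    by (rule continuous_on_subset[OF continuous_on_corner_integral[OF k]]) auto
  ultimately have "continuous_on ({0<..<1} \<times> {0<..<1}) ?G"
    by (intro continuous_on_diff continuous_on_add continuous_on_const)
  then show "continuous_on ({0<..<1} \<times> {0<..<1}) (\<lambda>q. \<integral>v. indicator (region01 q) v * k v \<partial>lborel)"
    by (rule continuous_on_eq) (simp add: eq)
  fix q :: "real \<times> real" assume q: "q \<in> {0<..<1} \<times> {0<..<1}"
  have "has_mixed_partial ?G q (- k q)"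
    using has_mixed_partial_separable_diff[OF has_mixed_partial_corner_integral[OF k q]
        has_real_derivative_corner_integral_snd[OF k, of 1 "snd q"], where u = "\<lambda>_. 0"] q
    by auto
  moreover have "\<forall>\<^sub>F r in nhds q. r \<in> {0<..<1} \<times> {0<..<1}"
    using q by (intro eventually_nhds_in_open open_Times) auto
  then have "\<forall>\<^sub>F r in nhds q. (\<integral>v. indicator (region01 r) v * k v \<partial>lborel) = ?G r"
    by eventually_elim (rule eq)
  ultimately show "has_mixed_partial (\<lambda>q. \<integral>v. indicator (region01 q) v * k v \<partial>lborel) q (- k q)"
    by (rule has_mixed_partial_cong_nhds)
qed

section \<open>Identification of the marginal treatment responses\<close>

lemma sets_borel_section_if_measurable_indicator:
  fixes R :: "real \<times> real \<Rightarrow> (real \<times> real) set"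
  assumes [measurable]: "(\<lambda>z. indicator (R (fst z)) (snd z) :: real) \<in> borel_measurable borel"
  shows "R q \<in> sets borel"
proof -
  have "(\<lambda>v. indicator (R (fst (q, v))) (snd (q, v)) :: real) \<in> borel_measurable borel"
    by measurable
  then show ?thesis
    by (simp add: borel_measurable_indicator_iff)
qed

lemma (in prob_space) cond_exp_version_indicator_freeze:
  fixes Q V :: "'a \<Rightarrow> real \<times> real" and Y :: "'a \<Rightarrow> real"
    and R :: "real \<times> real \<Rightarrow> (real \<times> real) set"
  assumes [measurable]: "Q \<in> borel_measurable M" "V \<in> borel_measurable M" "Y \<in> borel_measurable M"
    and "integrable M Y" and indep: "indep_rv M Q (\<lambda>\<omega>. (V \<omega>, Y \<omega>))"
    and R: "(\<lambda>z. indicator (R (fst z)) (snd z) :: real) \<in> borel_measurable borel"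
  shows "cond_exp_version M Q (\<lambda>\<omega>. indicator (R (Q \<omega>)) (V \<omega>) * Y \<omega>)
      (\<lambda>q. \<integral>\<omega>. indicator (R q) (V \<omega>) * Y \<omega> \<partial>M)"
proof -
  define F where "F q w = indicator (R q) (fst w) * snd w" for q and w :: "(real \<times> real) \<times> real"
  have "(\<lambda>z::(real \<times> real) \<times> (real \<times> real) \<times> real. (fst z, fst (snd z))) \<in> borel \<rightarrow>\<^sub>M borel"
    by (intro borel_measurable_continuous_onI continuous_intros)
  from measurable_compose[OF this R]
  have "(\<lambda>z::(real \<times> real) \<times> (real \<times> real) \<times> real. indicator (R (fst z)) (fst (snd z)) :: real)
      \<in> borel_measurable borel"
    by simp
  moreover have "(\<lambda>z::(real \<times> real) \<times> (real \<times> real) \<times> real. snd (snd z)) \<in> borel_measurable borel"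
    by (intro borel_measurable_continuous_onI continuous_intros)
  ultimately have "(\<lambda>z::(real \<times> real) \<times> (real \<times> real) \<times> real. F (fst z) (snd z)) \<in> borel_measurable borel"
    unfolding F_def by (rule borel_measurable_times)
  then have F_meas: "case_prod F \<in> borel_measurable (borel \<Otimes>\<^sub>M borel)"
    by (simp add: borel_prod case_prod_beta')
  have F_comp: "(\<lambda>\<omega>. F (Q \<omega>) (V \<omega>, Y \<omega>)) \<in> borel_measurable M"
    using measurable_compose[OF _ F_meas, of "\<lambda>\<omega>. (Q \<omega>, V \<omega>, Y \<omega>)" M] by simp
  have "cond_exp_version M Q (\<lambda>\<omega>. F (Q \<omega>) (V \<omega>, Y \<omega>)) (\<lambda>q. \<integral>\<omega>. F q (V \<omega>, Y \<omega>) \<partial>M)"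
  proof (rule cond_exp_version_indep_freeze[OF _ _ indep F_meas])
    show "integrable M (\<lambda>\<omega>. F (Q \<omega>) (V \<omega>, Y \<omega>))"
      by (rule Bochner_Integration.integrable_bound[OF \<open>integrable M Y\<close> F_comp])
        (auto simp: F_def indicator_def)
  qed auto
  then show ?thesis
    by (simp add: F_def)
qed

text \<open>The freezing lemma makes \<open>q \<mapsto> \<integral>\<^bsub>R q\<^esub> h m\<close> a version of \<open>E[f | Q]\<close>; being
  continuous, it agrees with \<open>\<psi>\<close> on a neighbourhood of \<open>p\<close>.\<close>

lemma (in prob_space) has_mixed_partial_cond_exp_version:
  fixes Q V :: "'a \<Rightarrow> real \<times> real" and Y f :: "'a \<Rightarrow> real"
    and R :: "real \<times> real \<Rightarrow> (real \<times> real) set"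
  assumes meas[measurable]: "Q \<in> borel_measurable M" "V \<in> borel_measurable M"
      "Y \<in> borel_measurable M" "f \<in> borel_measurable M"
    and "integrable M Y" and indep: "indep_rv M Q (\<lambda>\<omega>. (V \<omega>, Y \<omega>))"
    and R: "(\<lambda>z. indicator (R (fst z)) (snd z) :: real) \<in> borel_measurable borel"
    and f: "AE \<omega> in M. f \<omega> = indicator (R (Q \<omega>)) (V \<omega>) * Y \<omega>"
    and psi: "cond_exp_version M Q f psi" "continuous_on (supp_on M Q (\<lambda>_. True)) psi"
    and m: "cond_exp_version M V Y m"
    and h: "distributed M lborel V (\<lambda>v. ennreal (h v))" "\<And>v. 0 \<le> h v"
    and "open U"
    and G_cont: "continuous_on U (\<lambda>q. \<integral>v. indicator (R q) v * (h v * m v) \<partial>lborel)"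
    and G_mixed: "\<And>q. q \<in> U \<Longrightarrow>
      has_mixed_partial (\<lambda>q. \<integral>v. indicator (R q) v * (h v * m v) \<partial>lborel) q (c q)"
    and p: "p \<in> interior (supp_on M Q (\<lambda>_. True)) \<inter> U"
  shows "has_mixed_partial psi p (c p)"
proof -
  let ?G = "\<lambda>q. \<integral>v. indicator (R q) v * (h v * m v) \<partial>lborel"
  note freeze = cond_exp_version_indicator_freeze[OF _ _ _ \<open>integrable M Y\<close> indep R]
  have "(\<integral>\<omega>. indicator (R q) (V \<omega>) * Y \<omega> \<partial>M) = ?G q" for q
    using integral_cond_exp_version_density[OF m h sets_borel_section_if_measurable_indicator[OF R]]
    by (simp add: mult.commute)
  with freeze have G: "cond_exp_version M Q (\<lambda>\<omega>. indicator (R (Q \<omega>)) (V \<omega>) * Y \<omega>) ?G"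
    by simp
  have "(\<lambda>\<omega>. indicator (R (Q \<omega>)) (V \<omega>) :: real) \<in> borel_measurable M"
    using measurable_compose[OF _ R, of "\<lambda>\<omega>. (Q \<omega>, V \<omega>)" M] by simp
  then have "cond_exp_version M Q (\<lambda>\<omega>. indicator (R (Q \<omega>)) (V \<omega>) * Y \<omega>) psi"
    using meas by (intro cond_exp_version_cong_AE[OF psi(1) f] borel_measurable_times)
  from AE_eq_cond_exp_version[OF _ this G]
  have AE: "AE q in distr M borel Q. psi q = ?G q"
    by simp
  have "psi q = ?G q" if "q \<in> interior (supp_on M Q (\<lambda>_. True)) \<inter> U" for q
  proof (rule eq_on_supp_on_if_AE_eq[OF _ AE])
    show "q \<in> supp_on M Q (\<lambda>_. True)"
      using that interior_subset by blast
    show "isCont psi q"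
      using that by (intro continuous_on_interior[OF psi(2)]) auto
    show "isCont ?G q"
      using that \<open>open U\<close> by (intro continuous_on_interior[OF G_cont]) (auto simp: interior_open)
  qed auto
  moreover have "\<forall>\<^sub>F q in nhds p. q \<in> interior (supp_on M Q (\<lambda>_. True)) \<inter> U"
    using p \<open>open U\<close> by (intro eventually_nhds_in_open) auto
  ultimately have "\<forall>\<^sub>F q in nhds p. psi q = ?G q"
    by (auto elim: eventually_mono)
  with G_mixed p show ?thesis
    by (blast intro: has_mixed_partial_cong_nhds)
qed

text \<open>Assumption (d) of \<open>theorem1\<close>, that the propensities are continuously distributed, is
  left out: the conclusion only concerns interior points of the support.\<close>

locale two_player_treatment_model = prob_space M
  for M :: "'a measure"
    and V1 V2 P10 P11 P20 P21 D1 D2 Y1 :: "'a \<Rightarrow> real"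
    and Y :: "nat \<Rightarrow> nat \<Rightarrow> 'a \<Rightarrow> real"
    and h :: "real \<times> real \<Rightarrow> real" +
  assumes rv: "V1 \<in> borel_measurable M" "V2 \<in> borel_measurable M"
      "P10 \<in> borel_measurable M" "P11 \<in> borel_measurable M"
      "P20 \<in> borel_measurable M" "P21 \<in> borel_measurable M"
      "D1 \<in> borel_measurable M" "D2 \<in> borel_measurable M"
    and rvY: "\<And>d1 d2. d1 \<in> {0,1} \<Longrightarrow> d2 \<in> {0,1} \<Longrightarrow> Y d1 d2 \<in> borel_measurable M"
    and intY: "\<And>d1 d2. d1 \<in> {0,1} \<Longrightarrow> d2 \<in> {0,1} \<Longrightarrow> integrable M (Y d1 d2)"
    and P_range: "\<And>\<omega>. \<omega> \<in> space M \<Longrightarrow>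
      P10 \<omega> \<in> {0..1} \<and> P11 \<omega> \<in> {0..1} \<and> P20 \<omega> \<in> {0..1} \<and> P21 \<omega> \<in> {0..1}"
    and V1_unif: "distributed M lborel V1 (\<lambda>v. ennreal (indicator {0..1} v))"
    and V2_unif: "distributed M lborel V2 (\<lambda>v. ennreal (indicator {0..1} v))"
    and h_nonneg: "\<And>v. 0 \<le> h v"
    and h_density: "distributed M lborel (\<lambda>\<omega>. (V1 \<omega>, V2 \<omega>)) (\<lambda>v. ennreal (h v))"
    and h_cont: "continuous_on ({0..1} \<times> {0..1}) h"
    and D1_eq: "\<And>\<omega>. \<omega> \<in> space M \<Longrightarrow>
      D1 \<omega> = (if P10 \<omega> + D2 \<omega> * (P11 \<omega> - P10 \<omega>) \<ge> V1 \<omega> then 1 else 0)"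
    and D2_eq: "\<And>\<omega>. \<omega> \<in> space M \<Longrightarrow>
      D2 \<omega> = (if P20 \<omega> + D1 \<omega> * (P21 \<omega> - P20 \<omega>) \<ge> V2 \<omega> then 1 else 0)"
    and Y1_eq: "\<And>\<omega>. \<omega> \<in> space M \<Longrightarrow>
      Y1 \<omega> = (\<Sum>d1\<in>{0::nat,1}. \<Sum>d2\<in>{0::nat,1}.
                (if D1 \<omega> = real d1 \<and> D2 \<omega> = real d2 then 1 else 0) * Y d1 d2 \<omega>)"
    and complementarity: "AE \<omega> in M. P11 \<omega> - P10 \<omega> > 0 \<and> P21 \<omega> - P20 \<omega> > 0"
    and indep: "indep_rv M (\<lambda>\<omega>. (P10 \<omega>, P11 \<omega>, P20 \<omega>, P21 \<omega>))
      (\<lambda>\<omega>. (V1 \<omega>, V2 \<omega>, Y 0 0 \<omega>, Y 0 1 \<omega>, Y 1 0 \<omega>, Y 1 1 \<omega>))"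
begin

declare rv[measurable]

lemma Y_measurable[measurable]:
  "Y 0 0 \<in> borel_measurable M" "Y 0 1 \<in> borel_measurable M"
  "Y 1 0 \<in> borel_measurable M" "Y 1 1 \<in> borel_measurable M"
  using rvY by auto

lemma Y1_eq_cells:
  assumes "\<omega> \<in> space M"
  shows "Y1 \<omega> = (if D1 \<omega> = 0 \<and> D2 \<omega> = 0 then 1 else 0) * Y 0 0 \<omega>
    + (if D1 \<omega> = 0 \<and> D2 \<omega> = 1 then 1 else 0) * Y 0 1 \<omega>
    + ((if D1 \<omega> = 1 \<and> D2 \<omega> = 0 then 1 else 0) * Y 1 0 \<omega>
    + (if D1 \<omega> = 1 \<and> D2 \<omega> = 1 then 1 else 0) * Y 1 1 \<omega>)"
  using Y1_eq[OF assms] by simp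

lemma Y1_measurable[measurable]: "Y1 \<in> borel_measurable M"
  by (rule measurable_cong[THEN iffD2, OF Y1_eq_cells]) measurable

lemma AE_V_unit_square: "AE \<omega> in M. V1 \<omega> \<in> {0..1} \<and> V2 \<omega> \<in> {0..1}"
proof -
  have "AE \<omega> in M. V \<omega> \<in> {0..1}"
    if "distributed M lborel V (\<lambda>v. ennreal (indicator {0..1} v))" for V :: "'a \<Rightarrow> real"
    by (subst distributed_AE2[OF that]) (auto simp: indicator_def pred_def)
  with V1_unif V2_unif show ?thesis
    by auto
qed

lemma AE_cell10:
  "AE \<omega> in M. (if D1 \<omega> = 1 \<and> D2 \<omega> = 0 then 1 else 0) * Y1 \<omega>
     = indicator (region10 (P10 \<omega>, P21 \<omega>)) (V1 \<omega>, V2 \<omega>) * Y 1 0 \<omega>"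
  using complementarity AE_V_unit_square AE_space
proof eventually_elim
  case (elim \<omega>)
  then have "D1 \<omega> = 1 \<and> D2 \<omega> = 0 \<longleftrightarrow> (V1 \<omega>, V2 \<omega>) \<in> region10 (P10 \<omega>, P21 \<omega>)"
    using equilibrium_iff(1)[OF D1_eq D2_eq] by (auto simp: region10_def)
  with Y1_eq_cells[OF elim(3)] show ?case
    by auto
qed

lemma AE_cell01:
  "AE \<omega> in M. (if D1 \<omega> = 0 \<and> D2 \<omega> = 1 then 1 else 0) * Y1 \<omega>
     = indicator (region01 (P11 \<omega>, P20 \<omega>)) (V1 \<omega>, V2 \<omega>) * Y 0 1 \<omega>"
  using complementarity AE_V_unit_square AE_space
proof eventually_elim
  case (elim \<omega>)
  then have "D1 \<omega> = 0 \<and> D2 \<omega> = 1 \<longleftrightarrow> (V1 \<omega>, V2 \<omega>) \<in> region01 (P11 \<omega>, P20 \<omega>)"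
    using equilibrium_iff(2)[OF D1_eq D2_eq] by (auto simp: region01_def)
  with Y1_eq_cells[OF elim(3)] show ?case
    by auto
qed

lemma indep_rv_cell10: "indep_rv M (\<lambda>\<omega>. (P10 \<omega>, P21 \<omega>)) (\<lambda>\<omega>. ((V1 \<omega>, V2 \<omega>), Y 1 0 \<omega>))"
proof -
  have "(\<lambda>p::real \<times> real \<times> real \<times> real. (fst p, snd (snd (snd p)))) \<in> borel_measurable borel"
    "(\<lambda>w::real \<times> real \<times> real \<times> real \<times> real \<times> real.
        ((fst w, fst (snd w)), fst (snd (snd (snd (snd w)))))) \<in> borel_measurable borel"
    by (intro borel_measurable_continuous_onI continuous_intros)+
  from indep_rv_comp[OF indep this] show ?thesis
    by simp
qed

lemma indep_rv_cell01: "indep_rv M (\<lambda>\<omega>. (P11 \<omega>, P20 \<omega>)) (\<lambda>\<omega>. ((V1 \<omega>, V2 \<omega>), Y 0 1 \<omega>))"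
proof -
  have "(\<lambda>p::real \<times> real \<times> real \<times> real. (fst (snd p), fst (snd (snd p)))) \<in> borel_measurable borel"
    "(\<lambda>w::real \<times> real \<times> real \<times> real \<times> real \<times> real.
        ((fst w, fst (snd w)), fst (snd (snd (snd w))))) \<in> borel_measurable borel"
    by (intro borel_measurable_continuous_onI continuous_intros)+
  from indep_rv_comp[OF indep this] show ?thesis
    by simp
qed

lemma has_mixed_partial_psi10:
  fixes m psi :: "real \<times> real \<Rightarrow> real"
  assumes m: "cond_exp_version M (\<lambda>\<omega>. (V1 \<omega>, V2 \<omega>)) (Y 1 0) m"
      "continuous_on ({0..1} \<times> {0..1}) m"
    and psi: "cond_exp_version M (\<lambda>\<omega>. (P10 \<omega>, P21 \<omega>))
        (\<lambda>\<omega>. (if D1 \<omega> = 1 \<and> D2 \<omega> = 0 then 1 else 0) * Y1 \<omega>) psi"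
      "continuous_on (supp_on M (\<lambda>\<omega>. (P10 \<omega>, P21 \<omega>)) (\<lambda>_. True)) psi"
    and p: "p \<in> interior (supp_on M (\<lambda>\<omega>. (P10 \<omega>, P21 \<omega>)) (\<lambda>_. True))"
  shows "has_mixed_partial psi p (- (h p * m p))"
proof (rule has_mixed_partial_cond_exp_version[OF _ _ _ _ intY indep_rv_cell10
      borel_measurable_indicator_region10 AE_cell10 psi m(1) h_density h_nonneg])
  have hm: "continuous_on ({0..1} \<times> {0..1}) (\<lambda>v. h v * m v)"
    using h_cont m(2) by (rule continuous_on_mult)
  show "continuous_on ({0<..<1} \<times> {0<..<1})
      (\<lambda>q. \<integral>v. indicator (region10 q) v * (h v * m v) \<partial>lborel)"
    by (rule region10_integral(1)[OF hm])
  show "has_mixed_partial (\<lambda>q. \<integral>v. indicator (region10 q) v * (h v * m v) \<partial>lborel) q (- (h q * m q))"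
    if "q \<in> {0<..<1} \<times> {0<..<1}" for q
    using region10_integral(2)[OF hm that] by simp
  show "p \<in> interior (supp_on M (\<lambda>\<omega>. (P10 \<omega>, P21 \<omega>)) (\<lambda>_. True)) \<inter> {0<..<1} \<times> {0<..<1}"
    using p interior_supp_on_unit_square[of M "\<lambda>\<omega>. (P10 \<omega>, P21 \<omega>)"] P_range by auto
qed (auto simp: open_Times intro: rvY)

lemma has_mixed_partial_psi01:
  fixes m psi :: "real \<times> real \<Rightarrow> real"
  assumes m: "cond_exp_version M (\<lambda>\<omega>. (V1 \<omega>, V2 \<omega>)) (Y 0 1) m"
      "continuous_on ({0..1} \<times> {0..1}) m"
    and psi: "cond_exp_version M (\<lambda>\<omega>. (P11 \<omega>, P20 \<omega>))
        (\<lambda>\<omega>. (if D1 \<omega> = 0 \<and> D2 \<omega> = 1 then 1 else 0) * Y1 \<omega>) psi"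
      "continuous_on (supp_on M (\<lambda>\<omega>. (P11 \<omega>, P20 \<omega>)) (\<lambda>_. True)) psi"
    and p: "p \<in> interior (supp_on M (\<lambda>\<omega>. (P11 \<omega>, P20 \<omega>)) (\<lambda>_. True))"
  shows "has_mixed_partial psi p (- (h p * m p))"
proof (rule has_mixed_partial_cond_exp_version[OF _ _ _ _ intY indep_rv_cell01
      borel_measurable_indicator_region01 AE_cell01 psi m(1) h_density h_nonneg])
  have hm: "continuous_on ({0..1} \<times> {0..1}) (\<lambda>v. h v * m v)"
    using h_cont m(2) by (rule continuous_on_mult)
  show "continuous_on ({0<..<1} \<times> {0<..<1})
      (\<lambda>q. \<integral>v. indicator (region01 q) v * (h v * m v) \<partial>lborel)"
    by (rule region01_integral(1)[OF hm])
  show "has_mixed_partial (\<lambda>q. \<integral>v. indicator (region01 q) v * (h v * m v) \<partial>lborel) q (- (h q * m q))"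
    if "q \<in> {0<..<1} \<times> {0<..<1}" for q
    using region01_integral(2)[OF hm that] by simp
  show "p \<in> interior (supp_on M (\<lambda>\<omega>. (P11 \<omega>, P20 \<omega>)) (\<lambda>_. True)) \<inter> {0<..<1} \<times> {0<..<1}"
    using p interior_supp_on_unit_square[of M "\<lambda>\<omega>. (P11 \<omega>, P20 \<omega>)"] P_range by auto
qed (auto simp: open_Times intro: rvY)

end

theorem theorem1:
  fixes M :: "'a measure"
    and V1 V2 P10 P11 P20 P21 D1 D2 Y1 :: "'a \<Rightarrow> real"
    and Y :: "nat \<Rightarrow> nat \<Rightarrow> 'a \<Rightarrow> real"
    and h m10 m01 psi10 psi01 :: "real \<times> real \<Rightarrow> real"
  assumes prob: "prob_space M"
    \<comment> \<open>random variables\<close>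
    and rv: "V1 \<in> borel_measurable M" "V2 \<in> borel_measurable M"
            "P10 \<in> borel_measurable M" "P11 \<in> borel_measurable M"
            "P20 \<in> borel_measurable M" "P21 \<in> borel_measurable M"
            "D1 \<in> borel_measurable M" "D2 \<in> borel_measurable M"
    and rvY: "\<And>d1 d2. d1 \<in> {0,1} \<Longrightarrow> d2 \<in> {0,1} \<Longrightarrow> (Y d1 d2) \<in> borel_measurable M"
    and intY: "\<And>d1 d2. d1 \<in> {0,1} \<Longrightarrow> d2 \<in> {0,1} \<Longrightarrow> integrable M (Y d1 d2)"
    \<comment> \<open>propensities are conditional CDF values, hence in [0,1]\<close>
    and Prange: "\<And>\<omega>. \<omega> \<in> space M \<Longrightarrow> P10 \<omega> \<in> {0..1} \<and> P11 \<omega> \<in> {0..1} \<and> P20 \<omega> \<in> {0..1} \<and> P21 \<omega> \<in> {0..1}"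
    \<comment> \<open>V_j uniform on [0,1]; (V1,V2) has density h (given X = x)\<close>
    and V1unif: "distributed M lborel V1 (\<lambda>v. ennreal (indicator {0..1} v))"
    and V2unif: "distributed M lborel V2 (\<lambda>v. ennreal (indicator {0..1} v))"
    and hnn: "\<And>v. 0 \<le> h v"
    and hdens: "distributed M lborel (\<lambda>\<omega>. (V1 \<omega>, V2 \<omega>)) (\<lambda>v. ennreal (h v))"
    \<comment> \<open>treatments form a pure-strategy Nash equilibrium\<close>
    and D1eq: "\<And>\<omega>. \<omega> \<in> space M \<Longrightarrow>
       D1 \<omega> = (if P10 \<omega> + D2 \<omega> * (P11 \<omega> - P10 \<omega>) \<ge> V1 \<omega> then 1 else 0)"
    and D2eq: "\<And>\<omega>. \<omega> \<in> space M \<Longrightarrow>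
       D2 \<omega> = (if P20 \<omega> + D1 \<omega> * (P21 \<omega> - P20 \<omega>) \<ge> V2 \<omega> then 1 else 0)"
    \<comment> \<open>observed outcome of player 1\<close>
    and Y1eq: "\<And>\<omega>. \<omega> \<in> space M \<Longrightarrow>
       Y1 \<omega> = (\<Sum>d1\<in>{0::nat,1}. \<Sum>d2\<in>{0::nat,1}.
                 (if D1 \<omega> = real d1 \<and> D2 \<omega> = real d2 then 1 else 0) * Y d1 d2 \<omega>)"
    \<comment> \<open>(a) strategic complementarity\<close>
    and compl: "AE \<omega> in M. P11 \<omega> - P10 \<omega> > 0 \<and> P21 \<omega> - P20 \<omega> > 0"
    \<comment> \<open>(c) instruments (hence propensities) independent of (epsilon, U) given X = x\<close>
    and indep: "\<And>A B. A \<in> sets borel \<Longrightarrow> B \<in> sets borel \<Longrightarrow>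
       measure M {\<omega> \<in> space M. (P10 \<omega>, P11 \<omega>, P20 \<omega>, P21 \<omega>) \<in> A
                  \<and> (V1 \<omega>, V2 \<omega>, Y 0 0 \<omega>, Y 0 1 \<omega>, Y 1 0 \<omega>, Y 1 1 \<omega>) \<in> B}
       = measure M {\<omega> \<in> space M. (P10 \<omega>, P11 \<omega>, P20 \<omega>, P21 \<omega>) \<in> A}
         * measure M {\<omega> \<in> space M. (V1 \<omega>, V2 \<omega>, Y 0 0 \<omega>, Y 0 1 \<omega>, Y 1 0 \<omega>, Y 1 1 \<omega>) \<in> B}"
    \<comment> \<open>(d) propensities non-degenerate and continuously distributed given X = x\<close>
    and contP: "\<And>c. measure M {\<omega> \<in> space M. P10 \<omega> = c} = 0"
               "\<And>c. measure M {\<omega> \<in> space M. P11 \<omega> = c} = 0"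
               "\<And>c. measure M {\<omega> \<in> space M. P20 \<omega> = c} = 0"
               "\<And>c. measure M {\<omega> \<in> space M. P21 \<omega> = c} = 0"
    \<comment> \<open>MTR functions m^(1,0), m^(0,1) at X = x: versions of E[Y^(d) | V = v]\<close>
    and m10: "cond_exp_version M (\<lambda>\<omega>. (V1 \<omega>, V2 \<omega>)) (Y 1 0) m10"
    and m01: "cond_exp_version M (\<lambda>\<omega>. (V1 \<omega>, V2 \<omega>)) (Y 0 1) m01"
    \<comment> \<open>psi^(1,0), psi^(0,1) at X = x (continuous versions on the support)\<close>
    and psi10: "cond_exp_version M (\<lambda>\<omega>. (P10 \<omega>, P21 \<omega>))
                  (\<lambda>\<omega>. (if D1 \<omega> = 1 \<and> D2 \<omega> = 0 then 1 else 0) * Y1 \<omega>) psi10"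
    and psi01: "cond_exp_version M (\<lambda>\<omega>. (P11 \<omega>, P20 \<omega>))
                  (\<lambda>\<omega>. (if D1 \<omega> = 0 \<and> D2 \<omega> = 1 then 1 else 0) * Y1 \<omega>) psi01"
    and psi10_cont: "continuous_on (supp_on M (\<lambda>\<omega>. (P10 \<omega>, P21 \<omega>)) (\<lambda>_. True)) psi10"
    and psi01_cont: "continuous_on (supp_on M (\<lambda>\<omega>. (P11 \<omega>, P20 \<omega>)) (\<lambda>_. True)) psi01"
    \<comment> \<open>continuity of m^(1,0), m^(0,1), h in (v1,v2)\<close>
    and cont: "continuous_on ({0..1} \<times> {0..1}) m10" "continuous_on ({0..1} \<times> {0..1}) m01"
              "continuous_on ({0..1} \<times> {0..1}) h"
  shows
    "(\<forall>p \<in> supp_on M (\<lambda>\<omega>. (P10 \<omega>, P21 \<omega>)) (\<lambda>\<omega>. D1 \<omega> = 1 \<and> D2 \<omega> = 0)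
            \<inter> interior (supp_on M (\<lambda>\<omega>. (P10 \<omega>, P21 \<omega>)) (\<lambda>_. True)).
        \<exists>c. has_mixed_partial psi10 p c \<and> m10 p * h p = - c \<and>
            (h p \<noteq> 0 \<longrightarrow> m10 p = - (1 / h p) * c))
   \<and> (\<forall>p \<in> supp_on M (\<lambda>\<omega>. (P11 \<omega>, P20 \<omega>)) (\<lambda>\<omega>. D1 \<omega> = 0 \<and> D2 \<omega> = 1)
            \<inter> interior (supp_on M (\<lambda>\<omega>. (P11 \<omega>, P20 \<omega>)) (\<lambda>_. True)).
        \<exists>c. has_mixed_partial psi01 p c \<and> m01 p * h p = - c \<and>
            (h p \<noteq> 0 \<longrightarrow> m01 p = - (1 / h p) * c))"
proof -
  have indep_rv: "indep_rv M (\<lambda>\<omega>. (P10 \<omega>, P11 \<omega>, P20 \<omega>, P21 \<omega>))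
      (\<lambda>\<omega>. (V1 \<omega>, V2 \<omega>, Y 0 0 \<omega>, Y 0 1 \<omega>, Y 1 0 \<omega>, Y 1 1 \<omega>))"
    unfolding indep_rv_def using indep by blast
  interpret two_player_treatment_model M V1 V2 P10 P11 P20 P21 D1 D2 Y1 Y h
    by (intro two_player_treatment_model.intro two_player_treatment_model_axioms.intro)
      (fact prob indep_rv rv rvY intY Prange V1unif V2unif hnn hdens cont(3) D1eq D2eq Y1eq compl)+
  have "\<exists>c. has_mixed_partial psi p c \<and> m p * h p = - c \<and> (h p \<noteq> 0 \<longrightarrow> m p = - (1 / h p) * c)"
    if "has_mixed_partial psi p (- (h p * m p))" for psi m :: "real \<times> real \<Rightarrow> real" and p
    using that by (intro exI[of _ "- (h p * m p)"]) (auto simp: field_simps)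
  with has_mixed_partial_psi10[OF m10 cont(1) psi10 psi10_cont]
    has_mixed_partial_psi01[OF m01 cont(2) psi01 psi01_cont]
  show ?thesis
    by blast
qed

end
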